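(* Let $Z\colon\mathbb{R}^n\to\mathbb{R}^m$ be a jointly measurable random map. Assume that $\mu\in\mathcal{P}_c(\mathbb{R}^n)$ and $A\subset\mathbb{R}^n$ is an analytic set. Then, almost surely, $$\dim_P \mu_Z\ge \dim_{P,Z}\mu \quad\text{and}\quad \dim_P Z(A)\ge \dim_{P,Z} A.$$
   Context: A random map $Z\colon\mathbb{R}^n\to\mathbb{R}^m$ on a probability space $(\Omega,\mathcal{F},\mathbb{P})$ is jointly measurable if $Z\colon\mathbb{R}^n\times\Omega\to\mathbb{R}^m$ is measurable from $\mathcal{B}(\mathbb{R}^n)\otimes\mathcal{F}$ to $\mathcal{B}(\mathbb{R}^m)$. $\mathcal{P}_c(A)$ is the set of Borel probability measures with compact support contained in $A$; $\mu_Z=\mu\circ Z^{-1}$. $\dim_P$ of a set is packing dimension; for a Borel probability measure $\nu$ on $\mathbb{R}^m$, $\dim_P\nu=\inf\{\dim_P E: E \text{ Borel}, \nu(E)>0\}$. $B(x,r)$ is the closed Euclidean ball. For $\mu\in\mathcal{P}_c(\mathbb{R}^n)$, $$\dim_{P,Z}\mu=\sup\Big\{\gamma:\ \liminf_{r\to0+} r^{-\gamma}\,\mathbb{E}\big(\mu_Z(B(Z(t),r))\big)=0 \text{ for } \mu\text{-a.e. } t\Big\},$$ and $\dim_{P,Z}A=\sup\{\dim_{P,Z}\mu:\mu\in\mathcal{P}_c(A)\}$. *)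

theory Defs
  imports "HOL-Probability.Probability"
begin

text \<open>Packing premeasure: for delta > 0, supremum over (finite, hence also countable)
  disjoint families of closed balls centred in E with radii at most delta of
  the sum of diam^s; then the limit as delta tends to 0 (an infimum, by monotonicity).\<close>
definition packing_premeasure :: "real \<Rightarrow> 'a::euclidean_space set \<Rightarrow> ennreal" where
  "packing_premeasure s E =
     (INF \<delta>\<in>{0<..}. SUP F\<in>{F. finite F \<and> (\<forall>(x,r)\<in>F. x \<in> E \<and> 0 < r \<and> r \<le> \<delta>)
                         \<and> disjoint_family_on (\<lambda>(x,r). cball x r) F}.
        (\<Sum>(x,r)\<in>F. ennreal ((2 * r) powr s)))"

definition packing_measure :: "real \<Rightarrow> 'a::euclidean_space set \<Rightarrow> ennreal" where
  "packing_measure s E =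
     (INF Es\<in>{Es :: nat \<Rightarrow> 'a set. E \<subseteq> (\<Union>i. Es i)}. (\<Sum>i. packing_premeasure s (Es i)))"

definition packing_dim :: "'a::euclidean_space set \<Rightarrow> ereal" where
  "packing_dim E = Inf {ereal s | s. 0 \<le> s \<and> packing_measure s E = 0}"

text \<open>Packing dimension of a Borel measure (inf over empty set is +infinity).\<close>
definition packing_dim_measure :: "'a::euclidean_space measure \<Rightarrow> ereal" where
  "packing_dim_measure \<nu> = Inf {packing_dim E | E. E \<in> sets borel \<and> emeasure \<nu> E > 0}"

definition measure_support :: "'a::topological_space measure \<Rightarrow> 'a set" where
  "measure_support \<mu> = {x. \<forall>U. open U \<and> x \<in> U \<longrightarrow> emeasure \<mu> U > 0}"

definition Pc :: "'a::euclidean_space set \<Rightarrow> 'a measure set" where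
  "Pc A = {\<mu>. sets \<mu> = sets borel \<and> prob_space \<mu> \<and>
              compact (measure_support \<mu>) \<and> measure_support \<mu> \<subseteq> A}"

definition jointly_measurable :: "'w measure \<Rightarrow> ('a::euclidean_space \<Rightarrow> 'w \<Rightarrow> 'b::euclidean_space) \<Rightarrow> bool" where
  "jointly_measurable M Z \<longleftrightarrow> (\<lambda>(t, \<omega>). Z t \<omega>) \<in> borel_measurable (borel \<Otimes>\<^sub>M M)"

definition image_measure :: "'a::euclidean_space measure \<Rightarrow> ('a \<Rightarrow> 'w \<Rightarrow> 'b::euclidean_space) \<Rightarrow> 'w \<Rightarrow> 'b measure" where
  "image_measure \<mu> Z \<omega> = distr \<mu> borel (\<lambda>t. Z t \<omega>)"

definition packing_dim_Z :: "'w measure \<Rightarrow> ('a::euclidean_space \<Rightarrow> 'w \<Rightarrow> 'b::euclidean_space) \<Rightarrow> 'a measure \<Rightarrow> ereal" where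
  "packing_dim_Z M Z \<mu> = Sup {ereal \<gamma> | \<gamma>.
      AE t in \<mu>. Liminf (at_right (0::real))
        (\<lambda>r. ennreal (r powr (-\<gamma>)) *
             (\<integral>\<^sup>+ \<omega>. emeasure (image_measure \<mu> Z \<omega>) (cball (Z t \<omega>) r) \<partial>M)) = 0}"

definition packing_dim_Z_set :: "'w measure \<Rightarrow> ('a::euclidean_space \<Rightarrow> 'w \<Rightarrow> 'b::euclidean_space) \<Rightarrow> 'a set \<Rightarrow> ereal" where
  "packing_dim_Z_set M Z A = Sup (packing_dim_Z M Z ` Pc A)"

definition analytic_set :: "'a::euclidean_space set \<Rightarrow> bool" where
  "analytic_set A \<longleftrightarrow> A = {} \<or> (\<exists>f :: (nat \<Rightarrow> nat) \<Rightarrow> 'a. continuous_on UNIV f \<and> range f = A)"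

end

theory Submission
  imports Defs
begin

text \<open>Fix \<open>\<gamma>\<close> such that, for \<open>\<mu>\<close>-a.e. \<open>t\<close>, the expected image mass \<open>r\<^sup>-\<^sup>\<gamma> E \<mu>\<^sub>Z(B(Z t, r))\<close>
  has liminf 0 as \<open>r \<rightarrow> 0+\<close>. Fatou's lemma along a sequence of radii and Fubini's theorem show that,
  almost surely, \<open>\<mu>\<^sub>Z\<close> has vanishing lower \<open>s\<close>-density at \<open>Z t\<close> for \<open>\<mu>\<close>-a.e. \<open>t\<close> and every
  \<open>s \<le> \<gamma>\<close>. By Vitali's covering lemma, a set of positive outer \<open>\<mu>\<^sub>Z\<close>-measure on which the lower
  \<open>s\<close>-density vanishes admits packings by arbitrarily small disjoint balls with arbitrarily large
  \<open>\<Sum>(2r)\<^sup>s\<close>; hence every set containing it has infinite \<open>s\<close>-dimensional packing measure and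
  packing dimension at least \<open>\<gamma>\<close>. Letting \<open>\<gamma>\<close> run through the rationals gives both inequalities
  almost surely.\<close>

section \<open>Packing dimension from vanishing lower densities\<close>

lemma packing_dim_geI:
  assumes "\<And>s. 0 \<le> s \<Longrightarrow> s \<le> \<gamma> \<Longrightarrow> packing_measure s S = \<top>"
  shows "ereal \<gamma> \<le> packing_dim S"
  unfolding packing_dim_def
proof (rule Inf_greatest, safe)
  fix s assume "0 \<le> s" "packing_measure s S = 0"
  then show "ereal \<gamma> \<le> ereal s"
    using assms by force
qed

lemma packing_premeasure_eq_topI:
  assumes "\<And>\<delta> n. 0 < \<delta> \<Longrightarrow> \<exists>F. finite F \<and> (\<forall>(x,r)\<in>F. x \<in> E \<and> 0 < r \<and> r \<le> \<delta>)
             \<and> disjoint_family_on (\<lambda>(x,r). cball x r) F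
             \<and> of_nat n \<le> (\<Sum>(x,r)\<in>F. ennreal ((2 * r) powr s))"
  shows "packing_premeasure s E = \<top>"
  unfolding packing_premeasure_def
  using assms by (intro INF_eq_const ennreal_SUP_eq_top) auto

definition lower_density_zero :: "'a::metric_space measure \<Rightarrow> real \<Rightarrow> 'a \<Rightarrow> bool" where
  "lower_density_zero \<nu> s x \<longleftrightarrow>
     (\<forall>e::real>0. \<exists>\<^sub>F r in at_right 0. ennreal (r powr -s) * emeasure \<nu> (cball x r) < ennreal e)"

lemma lower_density_zeroI:
  assumes "\<And>e d. 0 < e \<Longrightarrow> 0 < d \<Longrightarrow>
             \<exists>r. 0 < r \<and> r < d \<and> ennreal (r powr -s) * emeasure \<nu> (cball x r) < ennreal e"
  shows "lower_density_zero \<nu> s x"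
proof (unfold lower_density_zero_def frequently_def eventually_at_right_field, intro allI impI notI)
  fix e :: real assume "0 < e" "\<exists>b>0. \<forall>r>0. r < b \<longrightarrow>
      \<not> ennreal (r powr -s) * emeasure \<nu> (cball x r) < ennreal e"
  then show False
    using assms by (metis not_less_iff_gr_or_eq)
qed

lemma lower_density_zeroD:
  assumes "lower_density_zero \<nu> s x" "0 < e" "0 < d"
  obtains r where "0 < r" "r < d" "ennreal (r powr -s) * emeasure \<nu> (cball x r) < ennreal e"
proof -
  have "\<exists>\<^sub>F r in at_right 0. ennreal (r powr -s) * emeasure \<nu> (cball x r) < ennreal e"
    using assms unfolding lower_density_zero_def by blast
  moreover have "\<forall>\<^sub>F r in at_right 0. 0 < r \<and> r < d"
    using \<open>0 < d\<close> unfolding eventually_at_right_field by auto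
  ultimately have "\<exists>\<^sub>F r in at_right 0.
      ennreal (r powr -s) * emeasure \<nu> (cball x r) < ennreal e \<and> 0 < r \<and> r < d"
    by (rule frequently_eventually_frequently)
  then show ?thesis
    using that by (auto dest: frequently_ex)
qed

lemma emeasure_le_of_scaled_less:
  fixes m :: ennreal
  assumes "0 < \<rho>" "ennreal (\<rho> powr -s) * m < ennreal \<epsilon>"
  shows "m \<le> ennreal (\<epsilon> * \<rho> powr s)"
proof -
  have "m = ennreal (\<rho> powr s) * (ennreal (\<rho> powr -s) * m)"
    using assms(1) by (simp add: mult.assoc[symmetric] ennreal_mult[symmetric] powr_minus)
  also have "\<dots> \<le> ennreal (\<rho> powr s) * ennreal \<epsilon>"
    using assms(2) by (intro mult_left_mono) auto
  finally show ?thesis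
    by (simp add: ennreal_mult'' mult.commute)
qed

lemma finite_disjoint_cballs_capturing_measure:
  fixes \<nu> :: "'a::euclidean_space measure" and c c' :: ennreal
  assumes \<nu>: "sets \<nu> = sets borel"
    and r: "\<And>x. x \<in> X \<Longrightarrow> 0 < r x \<and> r x \<le> \<delta>"
    and big: "\<And>B. B \<in> sets borel \<Longrightarrow> X \<subseteq> B \<Longrightarrow> c \<le> emeasure \<nu> B"
    and "c' < c"
  obtains C where "finite C" "C \<subseteq> X" "pairwise (\<lambda>x y. disjnt (cball x (r x)) (cball y (r y))) C"
    "c' < (\<Sum>x\<in>C. emeasure \<nu> (cball x (5 * r x)))"
proof -
  have cover: "X \<subseteq> (\<Union>x\<in>X. cball x (r x))"
    using r by force
  obtain D where D: "countable D" "D \<subseteq> X"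
      "pairwise (\<lambda>x y. disjnt (cball x (r x)) (cball y (r y))) D"
      "X \<subseteq> (\<Union>x\<in>D. cball x (5 * r x))"
    using Vitali_covering_lemma_cballs[where a="\<lambda>x. x" and B=\<delta>, OF cover r] by blast
  have "D \<noteq> {}"
    using D(4) big[of "{}"] \<open>c' < c\<close> by auto
  define e where "e = from_nat_into D"
  have range_e: "range e = D"
    using \<open>D \<noteq> {}\<close> D(1) by (simp add: e_def range_from_nat_into)
  define U where "U n = (\<Union>x\<in>e ` {..<n}. cball x (5 * r x))" for n
  have U: "range U \<subseteq> sets \<nu>" "incseq U"
    unfolding U_def \<nu> incseq_def by (auto 4 3 intro: order.strict_trans2)
  have "X \<subseteq> (\<Union>n. U n)"
    using D(4) by (auto simp: U_def range_e[symmetric] intro: lessI)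
  then have "c \<le> emeasure \<nu> (\<Union>n. U n)"
    using U(1) \<nu> by (intro big) auto
  also have "\<dots> = (SUP n. emeasure \<nu> (U n))"
    using U by (rule SUP_emeasure_incseq[symmetric])
  finally have "c' < (SUP n. emeasure \<nu> (U n))"
    using \<open>c' < c\<close> by (rule order.strict_trans2[rotated])
  then obtain n where "c' < emeasure \<nu> (U n)"
    by (auto simp: less_SUP_iff)
  also have "\<dots> \<le> (\<Sum>x\<in>e ` {..<n}. emeasure \<nu> (cball x (5 * r x)))"
    unfolding U_def by (intro emeasure_subadditive_finite) (auto simp: \<nu>)
  finally show ?thesis
    using that[of "e ` {..<n}"] D(2,3) range_e by (auto intro: pairwise_subset)
qed

lemma packing_premeasure_eq_top:
  fixes \<nu> :: "'a::euclidean_space measure"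
  assumes \<nu>: "sets \<nu> = sets borel" and "0 < c" and "X \<subseteq> E"
    and big: "\<And>B. B \<in> sets borel \<Longrightarrow> X \<subseteq> B \<Longrightarrow> ennreal c \<le> emeasure \<nu> B"
    and density: "\<And>x. x \<in> X \<Longrightarrow> lower_density_zero \<nu> s x"
  shows "packing_premeasure s E = \<top>"
proof (rule packing_premeasure_eq_topI)
  fix \<delta> :: real and n :: nat assume "0 < \<delta>"
  \<comment> \<open>The enlarged balls of the Vitali family carry mass \<open>> c/2\<close>, and each has mass at most
    \<open>\<epsilon> (5/2)\<^sup>s (2r)\<^sup>s\<close>; this choice of \<open>\<epsilon>\<close> then forces \<open>\<Sum>(2r)\<^sup>s > n\<close>.\<close>
  define \<epsilon> where "\<epsilon> = c / (2 * (5/2) powr s * (n + 1))"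
  have "0 < \<epsilon>"
    using \<open>0 < c\<close> by (simp add: \<epsilon>_def)
  have "\<exists>\<rho>. 0 < \<rho> \<and> \<rho> < 5 * \<delta> \<and> ennreal (\<rho> powr -s) * emeasure \<nu> (cball x \<rho>) < ennreal \<epsilon>"
    if "x \<in> X" for x
    by (rule lower_density_zeroD[OF density[OF that] \<open>0 < \<epsilon>\<close>, of "5 * \<delta>"]) (use \<open>0 < \<delta>\<close> in auto)
  then obtain \<rho> where \<rho>: "\<And>x. x \<in> X \<Longrightarrow> 0 < \<rho> x \<and> \<rho> x < 5 * \<delta> \<and>
      ennreal (\<rho> x powr -s) * emeasure \<nu> (cball x (\<rho> x)) < ennreal \<epsilon>"
    by metis
  define r where "r x = \<rho> x / 5" for x
  have r: "0 < r x \<and> r x \<le> \<delta>" if "x \<in> X" for x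
    using \<rho>[OF that] by (auto simp: r_def)
  have ball: "emeasure \<nu> (cball x (5 * r x)) \<le> ennreal (\<epsilon> * (5/2) powr s * (2 * r x) powr s)"
    if "x \<in> X" for x
  proof -
    have "(5/2) powr s * (2 * r x) powr s = \<rho> x powr s"
      using r[OF that] by (simp add: powr_mult[symmetric] r_def)
    then show ?thesis
      using emeasure_le_of_scaled_less[of "\<rho> x" s] \<rho>[OF that] by (simp add: r_def mult.assoc)
  qed
  have "ennreal (c / 2) < ennreal c"
    using \<open>0 < c\<close> by (simp add: ennreal_lessI)
  obtain C where C: "finite C" "C \<subseteq> X"
      "pairwise (\<lambda>x y. disjnt (cball x (r x)) (cball y (r y))) C"
      "ennreal (c / 2) < (\<Sum>x\<in>C. emeasure \<nu> (cball x (5 * r x)))"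
    by (rule finite_disjoint_cballs_capturing_measure[OF \<nu> r big \<open>ennreal (c / 2) < ennreal c\<close>])
  define S where "S = (\<Sum>x\<in>C. (2 * r x) powr s)"
  note C(4)
  also have "(\<Sum>x\<in>C. emeasure \<nu> (cball x (5 * r x)))
      \<le> (\<Sum>x\<in>C. ennreal (\<epsilon> * (5/2) powr s * (2 * r x) powr s))"
    using C(2) ball by (intro sum_mono) auto
  also have "\<dots> = ennreal (\<epsilon> * (5/2) powr s * S)"
    using \<open>0 < \<epsilon>\<close> by (subst sum_ennreal) (auto simp: S_def sum_distrib_left)
  finally have "c / 2 < \<epsilon> * (5/2) powr s * S"
    using \<open>0 < c\<close> by (simp add: ennreal_less_iff)
  moreover have "\<epsilon> * (5/2) powr s = c / (2 * (n + 1))"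
    by (simp add: \<epsilon>_def)
  ultimately have "c * (n + 1) < c * S"
    by (simp add: field_simps)
  then have "real n < S"
    using \<open>0 < c\<close> by simp
  define F where "F = (\<lambda>x. (x, r x)) ` C"
  have sum_F: "(\<Sum>(x,r)\<in>F. ennreal ((2 * r) powr s)) = ennreal S"
    by (simp add: F_def S_def sum.reindex inj_on_def)
  show "\<exists>F. finite F \<and> (\<forall>(x, r)\<in>F. x \<in> E \<and> 0 < r \<and> r \<le> \<delta>)
      \<and> disjoint_family_on (\<lambda>(x, r). cball x r) F
      \<and> of_nat n \<le> (\<Sum>(x, r)\<in>F. ennreal ((2 * r) powr s))"
  proof (intro exI[of _ F] conjI)
    show "finite F" "\<forall>(x, r)\<in>F. x \<in> E \<and> 0 < r \<and> r \<le> \<delta>"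
      using C(1,2) r \<open>X \<subseteq> E\<close> by (auto simp: F_def)
    show "disjoint_family_on (\<lambda>(x, r). cball x r) F"
      using C(3) by (auto simp: F_def disjoint_family_on_def pairwise_def disjnt_def)
    show "of_nat n \<le> (\<Sum>(x, r)\<in>F. ennreal ((2 * r) powr s))"
      using sum_F \<open>real n < S\<close> by (simp add: ennreal_of_nat_eq_real_of_nat ennreal_leI)
  qed
qed

lemma borel_covers_measure_lower_bound:
  fixes \<nu> :: "'a::topological_space measure"
  assumes \<nu>: "sets \<nu> = sets borel" and X: "\<And>N. N \<in> null_sets \<nu> \<Longrightarrow> \<not> X \<subseteq> N"
  obtains c where "0 < c" "\<And>B. B \<in> sets borel \<Longrightarrow> X \<subseteq> B \<Longrightarrow> ennreal c \<le> emeasure \<nu> B"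
proof -
  have "\<exists>c>0. \<forall>B\<in>sets borel. X \<subseteq> B \<longrightarrow> ennreal c \<le> emeasure \<nu> B"
  proof (rule ccontr)
    assume "\<not> ?thesis"
    then have "\<forall>n::nat. \<exists>B\<in>sets borel. X \<subseteq> B \<and> emeasure \<nu> B < ennreal (1 / Suc n)"
      by (auto simp: not_le)
    then obtain B where B: "\<And>n. B n \<in> sets borel" "\<And>n. X \<subseteq> B n"
        "\<And>n. emeasure \<nu> (B n) < ennreal (1 / Suc n)"
      by metis
    have "emeasure \<nu> (\<Inter>n. B n) \<le> 0"
    proof (rule ennreal_le_epsilon)
      fix e :: real assume "0 < e"
      then obtain n where n: "inverse (real (Suc n)) < e"
        using reals_Archimedean by blast
      have "emeasure \<nu> (\<Inter>n. B n) \<le> emeasure \<nu> (B n)"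
        using B(1) \<nu> by (intro emeasure_mono) auto
      also have "\<dots> \<le> ennreal e"
        using B(3)[of n] n by (auto simp: divide_inverse intro: order.trans[OF less_imp_le ennreal_leI])
      finally show "emeasure \<nu> (\<Inter>n. B n) \<le> 0 + ennreal e" by simp
    qed
    moreover have "(\<Inter>n. B n) \<in> sets \<nu>"
      using B(1) \<nu> by auto
    ultimately show False
      using X[of "\<Inter>n. B n"] B(2) by auto
  qed
  then show ?thesis
    using that by blast
qed

lemma packing_measure_eq_top:
  fixes \<nu> :: "'a::euclidean_space measure"
  assumes \<nu>: "sets \<nu> = sets borel" and "Y \<subseteq> S"
    and Y: "\<And>N. N \<in> null_sets \<nu> \<Longrightarrow> \<not> Y \<subseteq> N"
    and density: "\<And>y. y \<in> Y \<Longrightarrow> lower_density_zero \<nu> s y"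
  shows "packing_measure s S = \<top>"
  unfolding packing_measure_def
proof (rule INF_eq_const)
  fix Es :: "nat \<Rightarrow> 'a set" assume Es: "Es \<in> {Es. S \<subseteq> (\<Union>i. Es i)}"
  have "\<exists>i. \<forall>N\<in>null_sets \<nu>. \<not> Es i \<inter> Y \<subseteq> N"
  proof (rule ccontr)
    assume "\<not> ?thesis"
    then have "\<forall>i. \<exists>N. N \<in> null_sets \<nu> \<and> Es i \<inter> Y \<subseteq> N"
      by blast
    then obtain N where N: "\<And>i. N i \<in> null_sets \<nu>" "\<And>i. Es i \<inter> Y \<subseteq> N i"
      by metis
    have "(\<Union>i. N i) \<in> null_sets \<nu>"
      using N(1) by blast
    moreover have "Y \<subseteq> (\<Union>i. N i)"
      using Es \<open>Y \<subseteq> S\<close> N(2) by blast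
    ultimately show False
      using Y by blast
  qed
  then obtain i where "\<And>N. N \<in> null_sets \<nu> \<Longrightarrow> \<not> Es i \<inter> Y \<subseteq> N"
    by blast
  then obtain c where "0 < c" "\<And>B. B \<in> sets borel \<Longrightarrow> Es i \<inter> Y \<subseteq> B \<Longrightarrow> ennreal c \<le> emeasure \<nu> B"
    using borel_covers_measure_lower_bound[OF \<nu>, of "Es i \<inter> Y"] by blast
  then have "packing_premeasure s (Es i) = \<top>"
    using density by (intro packing_premeasure_eq_top[OF \<nu>, of c "Es i \<inter> Y"]) auto
  then show "(\<Sum>i. packing_premeasure s (Es i)) = \<top>"
    using ennreal_suminf_lessD[of "\<lambda>i. packing_premeasure s (Es i)" \<top> i] top.not_eq_extremum
    by blast
next
  show "{Es. S \<subseteq> (\<Union>i. Es i)} \<noteq> {}"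
    by (auto intro: exI[of _ "\<lambda>_. S"])
qed

lemma packing_dim_ge_of_lower_density_zero:
  fixes \<nu> :: "'a::euclidean_space measure"
  assumes "sets \<nu> = sets borel" and "Y \<subseteq> S"
    and "\<And>N. N \<in> null_sets \<nu> \<Longrightarrow> \<not> Y \<subseteq> N"
    and "\<And>s y. s \<le> \<gamma> \<Longrightarrow> y \<in> Y \<Longrightarrow> lower_density_zero \<nu> s y"
  shows "ereal \<gamma> \<le> packing_dim S"
  using packing_measure_eq_top[OF assms(1-3)] assms(4) by (intro packing_dim_geI) auto

lemma compl_measure_support: "- measure_support \<mu> = \<Union>{U. open U \<and> emeasure \<mu> U = 0}"
  by (auto simp: measure_support_def not_less)

lemma closed_measure_support: "closed (measure_support \<mu>)"
  unfolding closed_def compl_measure_support by auto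

lemma AE_in_measure_support:
  fixes \<mu> :: "'a::second_countable_topology measure"
  assumes "sets \<mu> = sets borel"
  shows "AE x in \<mu>. x \<in> measure_support \<mu>"
proof -
  obtain \<F> where \<F>: "\<F> \<subseteq> {U. open U \<and> emeasure \<mu> U = 0}" "countable \<F>"
      "\<Union>\<F> = - measure_support \<mu>"
    using Lindelof[of "{U. open U \<and> emeasure \<mu> U = 0}"] unfolding compl_measure_support by auto
  have "(\<Union>U\<in>\<F>. U) \<in> null_sets \<mu>"
    using \<F>(1,2) assms by (intro null_sets_UN') (auto simp: null_sets_def intro: borel_open)
  then show ?thesis
    using \<F>(3) by (intro AE_I[where N="\<Union>\<F>"]) auto
qed

section \<open>Vanishing lower densities along rational radii\<close>

lemma Liminf_eq_bot_frequently_less: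
  fixes X :: "'a \<Rightarrow> 'b::complete_linorder"
  assumes "Liminf F X = bot" "bot < b"
  shows "\<exists>\<^sub>F x in F. X x < b"
proof -
  obtain y where "y < b" "\<not> eventually (\<lambda>x. y < X x) F"
    using assms le_Liminf_iff[of b F X] by auto
  then show ?thesis
    unfolding not_eventually by (auto elim: frequently_elim1)
qed

text \<open>A countable form of \<open>liminf (r \<rightarrow> 0+) r\<^sup>-\<^sup>\<gamma> g r = 0\<close>, equivalent to it for
  nondecreasing \<open>g\<close>; quantifying only over rationals keeps it measurable in the parameters of \<open>g\<close>,
  which is what allows the use of Fubini's theorem below.\<close>

definition small_at_rational_radii :: "real \<Rightarrow> (real \<Rightarrow> ennreal) \<Rightarrow> bool" where
  "small_at_rational_radii \<gamma> g \<longleftrightarrow>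
     (\<forall>k j :: nat. \<exists>q::rat. 0 < real_of_rat q \<and> real_of_rat q < 1 / Suc j \<and>
        ennreal (real_of_rat q powr -\<gamma>) * g (real_of_rat q) < ennreal (1 / Suc k))"

lemma lower_density_zero_if_small_at_rational_radii:
  assumes "small_at_rational_radii \<gamma> (\<lambda>r. emeasure \<nu> (cball x r))" "s \<le> \<gamma>"
  shows "lower_density_zero \<nu> s x"
proof (rule lower_density_zeroI)
  fix e d :: real assume "0 < e" "0 < d"
  obtain k :: nat where k: "1 / Suc k < e"
    using reals_Archimedean[OF \<open>0 < e\<close>] by (auto simp: inverse_eq_divide)
  obtain j :: nat where j: "1 / Suc j < min d 1"
    using reals_Archimedean[of "min d 1"] \<open>0 < d\<close> by (auto simp: inverse_eq_divide)
  obtain q :: rat where q: "0 < real_of_rat q" "real_of_rat q < 1 / Suc j"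
      "ennreal (real_of_rat q powr -\<gamma>) * emeasure \<nu> (cball x (real_of_rat q)) < ennreal (1 / Suc k)"
    using assms(1) unfolding small_at_rational_radii_def by blast
  have "1 / real (Suc j) \<le> 1"
    by simp
  then have "real_of_rat q \<le> 1"
    using q(2) by linarith
  then have "ennreal (real_of_rat q powr -s) * emeasure \<nu> (cball x (real_of_rat q))
      \<le> ennreal (real_of_rat q powr -\<gamma>) * emeasure \<nu> (cball x (real_of_rat q))"
    using q(1) \<open>s \<le> \<gamma>\<close> by (intro mult_right_mono ennreal_leI powr_mono') auto
  also have "\<dots> < ennreal (1 / Suc k)"
    by (rule q(3))
  also have "\<dots> \<le> ennreal e"
    using k by (intro ennreal_leI) simp
  finally show "\<exists>r>0. r < d \<and> ennreal (r powr -s) * emeasure \<nu> (cball x r) < ennreal e"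
    using q(1,2) j by (intro exI[of _ "real_of_rat q"]) auto
qed

lemma rational_below_powr_bound:
  fixes \<gamma> r :: real
  assumes "0 < r"
  obtains q :: rat where "0 < real_of_rat q" "real_of_rat q < r" "real_of_rat q powr -\<gamma> < 2 * r powr -\<gamma>"
proof -
  have "((\<lambda>q. q powr -\<gamma>) \<longlongrightarrow> r powr -\<gamma>) (at r)"
    using assms by (intro tendsto_intros) auto
  moreover have "r powr -\<gamma> < 2 * r powr -\<gamma>"
    using assms by simp
  ultimately have "\<forall>\<^sub>F q in at r. q powr -\<gamma> < 2 * r powr -\<gamma>"
    by (rule order_tendstoD)
  then obtain \<eta> where \<eta>: "0 < \<eta>" "\<And>q. q \<noteq> r \<Longrightarrow> dist q r < \<eta> \<Longrightarrow> q powr -\<gamma> < 2 * r powr -\<gamma>"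
    unfolding eventually_at by blast
  obtain q where q: "q \<in> \<rat>" "max 0 (r - \<eta>) < q" "q < r"
    using Rats_dense_in_real[of "max 0 (r - \<eta>)" r] assms \<eta>(1) by auto
  then obtain q' where "q = real_of_rat q'"
    by (auto simp: Rats_def)
  with q \<eta> show ?thesis
    by (intro that[of q']) (auto simp: dist_real_def)
qed

lemma Liminf_zero_rational_radius:
  fixes g :: "real \<Rightarrow> ennreal"
  assumes mono: "\<And>r r'. 0 < r \<Longrightarrow> r \<le> r' \<Longrightarrow> g r \<le> g r'"
    and "Liminf (at_right 0) (\<lambda>r. ennreal (r powr -\<gamma>) * g r) = 0"
    and "0 < e" "0 < d"
  obtains q :: rat where "0 < real_of_rat q" "real_of_rat q < d"
    "ennreal (real_of_rat q powr -\<gamma>) * g (real_of_rat q) < ennreal e"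
proof -
  have "\<exists>\<^sub>F r in at_right 0. ennreal (r powr -\<gamma>) * g r < ennreal (e / 2)"
    using assms(2,3) by (intro Liminf_eq_bot_frequently_less) (auto simp: bot_ennreal)
  moreover have "\<forall>\<^sub>F r in at_right 0. 0 < r \<and> r < d"
    using \<open>0 < d\<close> unfolding eventually_at_right_field by auto
  ultimately have "\<exists>\<^sub>F r in at_right 0. ennreal (r powr -\<gamma>) * g r < ennreal (e / 2) \<and> 0 < r \<and> r < d"
    by (rule frequently_eventually_frequently)
  then obtain r where r: "0 < r" "r < d" "ennreal (r powr -\<gamma>) * g r < ennreal (e / 2)"
    by (auto dest: frequently_ex)
  obtain q where q: "0 < real_of_rat q" "real_of_rat q < r" "real_of_rat q powr -\<gamma> < 2 * r powr -\<gamma>"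
    using rational_below_powr_bound[OF r(1)] by blast
  have "ennreal (real_of_rat q powr -\<gamma>) * g (real_of_rat q) \<le> ennreal (2 * r powr -\<gamma>) * g r"
    using q by (intro mult_mono mono ennreal_leI) auto
  also have "\<dots> = 2 * (ennreal (r powr -\<gamma>) * g r)"
    by (simp add: ennreal_mult' mult.assoc)
  also have "\<dots> < 2 * ennreal (e / 2)"
    using r(3) by (intro ennreal_mult_strict_left_mono) auto
  also have "\<dots> = ennreal e"
    using ennreal_mult'[of 2 "e / 2"] by simp
  finally show ?thesis
    using q r that by auto
qed

lemma small_at_rational_radiiI:
  fixes q :: "nat \<Rightarrow> rat"
  assumes q: "\<And>k. 0 < real_of_rat (q k)" "\<And>k. real_of_rat (q k) < 1 / Suc k"
    and "liminf (\<lambda>k. ennreal (real_of_rat (q k) powr -\<gamma>) * g (real_of_rat (q k))) = 0"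
  shows "small_at_rational_radii \<gamma> g"
  unfolding small_at_rational_radii_def
proof (intro allI)
  fix k j :: nat
  have "\<exists>\<^sub>F n in sequentially.
      ennreal (real_of_rat (q n) powr -\<gamma>) * g (real_of_rat (q n)) < ennreal (1 / Suc k)"
    using assms(3) by (intro Liminf_eq_bot_frequently_less) (auto simp: bot_ennreal)
  from frequently_eventually_frequently[OF this eventually_ge_at_top[of j]]
  obtain n where n: "ennreal (real_of_rat (q n) powr -\<gamma>) * g (real_of_rat (q n)) < ennreal (1 / Suc k)"
      "j \<le> n"
    by (auto dest: frequently_ex)
  have "1 / real (Suc n) \<le> 1 / Suc j"
    using n(2) by (intro divide_left_mono) auto
  then show "\<exists>q. 0 < real_of_rat q \<and> real_of_rat q < 1 / Suc j \<and>
      ennreal (real_of_rat q powr -\<gamma>) * g (real_of_rat q) < ennreal (1 / Suc k)"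
    using q[of n] n(1) by (intro exI[of _ "q n"]) auto
qed

lemma AE_small_at_rational_radii:
  fixes g :: "'w \<Rightarrow> real \<Rightarrow> ennreal"
  assumes meas: "\<And>r. (\<lambda>\<omega>. g \<omega> r) \<in> borel_measurable M"
    and mono: "\<And>\<omega> r r'. \<omega> \<in> space M \<Longrightarrow> 0 < r \<Longrightarrow> r \<le> r' \<Longrightarrow> g \<omega> r \<le> g \<omega> r'"
    and "Liminf (at_right 0) (\<lambda>r. ennreal (r powr -\<gamma>) * (\<integral>\<^sup>+\<omega>. g \<omega> r \<partial>M)) = 0"
  shows "AE \<omega> in M. small_at_rational_radii \<gamma> (g \<omega>)"
proof -
  have mono_expectation: "(\<integral>\<^sup>+\<omega>. g \<omega> r \<partial>M) \<le> (\<integral>\<^sup>+\<omega>. g \<omega> r' \<partial>M)" if "0 < r" "r \<le> r'" for r r'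
    using that mono by (intro nn_integral_mono) auto
  have "\<exists>q::rat. 0 < real_of_rat q \<and> real_of_rat q < 1 / Suc k \<and>
      ennreal (real_of_rat q powr -\<gamma>) * (\<integral>\<^sup>+\<omega>. g \<omega> (real_of_rat q) \<partial>M) < ennreal (1 / Suc k)" for k
    by (rule Liminf_zero_rational_radius[OF mono_expectation assms(3), of "1 / Suc k" "1 / Suc k"]) auto
  then obtain q :: "nat \<Rightarrow> rat" where q: "\<And>k. 0 < real_of_rat (q k)" "\<And>k. real_of_rat (q k) < 1 / Suc k"
      "\<And>k. ennreal (real_of_rat (q k) powr -\<gamma>) * (\<integral>\<^sup>+\<omega>. g \<omega> (real_of_rat (q k)) \<partial>M) < ennreal (1 / Suc k)"
    by metis
  define u where "u k \<omega> = ennreal (real_of_rat (q k) powr -\<gamma>) * g \<omega> (real_of_rat (q k))" for k \<omega>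
  have u: "u k \<in> borel_measurable M" for k
    unfolding u_def using meas by measurable
  have liminf_u: "(\<lambda>\<omega>. liminf (\<lambda>k. u k \<omega>)) \<in> borel_measurable M"
    using u by measurable
  have bound_to_0: "(\<lambda>k. ennreal (1 / Suc k)) \<longlonglongrightarrow> 0"
    using tendsto_ennrealI[OF LIMSEQ_inverse_real_of_nat] by (simp add: inverse_eq_divide)
  have "(\<integral>\<^sup>+\<omega>. liminf (\<lambda>k. u k \<omega>) \<partial>M) \<le> liminf (\<lambda>k. \<integral>\<^sup>+\<omega>. u k \<omega> \<partial>M)"
    by (rule nn_integral_liminf[OF u])
  also have "\<dots> \<le> liminf (\<lambda>k. ennreal (1 / Suc k))"
    using q(3) meas
    by (intro Liminf_mono always_eventually allI) (auto simp: u_def nn_integral_cmult intro: less_imp_le)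
  also have "\<dots> = 0"
    using bound_to_0 by (intro lim_imp_Liminf) auto
  finally have "AE \<omega> in M. liminf (\<lambda>k. u k \<omega>) = 0"
    by (simp add: nn_integral_0_iff_AE[OF liminf_u])
  then show ?thesis
    by (rule eventually_mono) (auto intro: small_at_rational_radiiI[OF q(1,2)] simp: u_def)
qed

section \<open>Random maps\<close>

locale random_map =
  fixes M :: "'w measure" and Z :: "'a::euclidean_space \<Rightarrow> 'w \<Rightarrow> 'b::euclidean_space"
    and \<mu> :: "'a measure"
  assumes prob_space_M: "prob_space M" and jointly_measurable_Z: "jointly_measurable M Z"
    and sets_\<mu>: "sets \<mu> = sets borel" and prob_space_\<mu>: "prob_space \<mu>"
begin

lemma space_\<mu> [simp]: "space \<mu> = UNIV"
  using sets_eq_imp_space_eq[OF sets_\<mu>] by simp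

lemma measurable_Z_pair: "(\<lambda>x. Z (fst x) (snd x)) \<in> borel_measurable (\<mu> \<Otimes>\<^sub>M M)"
proof -
  have "(\<lambda>(t, \<omega>). Z t \<omega>) \<in> borel_measurable (borel \<Otimes>\<^sub>M M)"
    using jointly_measurable_Z by (simp add: jointly_measurable_def)
  then show ?thesis
    by (subst measurable_cong_sets[OF sets_pair_measure_cong[OF sets_\<mu> refl] refl])
      (simp add: case_prod_beta')
qed

lemma measurable_Z [measurable]:
  "f \<in> measurable N \<mu> \<Longrightarrow> g \<in> measurable N M \<Longrightarrow> (\<lambda>x. Z (f x) (g x)) \<in> borel_measurable N"
  using measurable_compose[OF measurable_Pair measurable_Z_pair] by simp

lemma measurable_Z_section: "\<omega> \<in> space M \<Longrightarrow> (\<lambda>t. Z t \<omega>) \<in> borel_measurable \<mu>"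
  by measurable

lemma emeasure_image_measure:
  "\<omega> \<in> space M \<Longrightarrow> B \<in> sets borel \<Longrightarrow>
    emeasure (image_measure \<mu> Z \<omega>) B = emeasure \<mu> ((\<lambda>t. Z t \<omega>) -` B)"
  unfolding image_measure_def by (subst emeasure_distr[OF measurable_Z_section]) auto

abbreviation ball_mass :: "'a \<Rightarrow> 'w \<Rightarrow> real \<Rightarrow> ennreal" where
  "ball_mass t \<omega> r \<equiv> emeasure (image_measure \<mu> Z \<omega>) (cball (Z t \<omega>) r)"

abbreviation mean_lower_density_zero :: "real \<Rightarrow> bool" where
  "mean_lower_density_zero \<gamma> \<equiv>
    AE t in \<mu>. Liminf (at_right 0) (\<lambda>r. ennreal (r powr -\<gamma>) * (\<integral>\<^sup>+\<omega>. ball_mass t \<omega> r \<partial>M)) = 0"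

lemma ball_mass_mono: "r \<le> r' \<Longrightarrow> ball_mass t \<omega> r \<le> ball_mass t \<omega> r'"
  unfolding image_measure_def by (intro emeasure_mono) (auto simp: subset_cball)

lemma measurable_ball_mass [measurable]:
  "(\<lambda>x. ball_mass (fst x) (snd x) r) \<in> borel_measurable (\<mu> \<Otimes>\<^sub>M M)"
proof -
  interpret \<mu>: prob_space \<mu>
    by (rule prob_space_\<mu>)
  define Q where "Q = {y \<in> space ((\<mu> \<Otimes>\<^sub>M M) \<Otimes>\<^sub>M \<mu>).
    dist (Z (fst (fst y)) (snd (fst y))) (Z (snd y) (snd (fst y))) \<le> r}"
  have "Q \<in> sets ((\<mu> \<Otimes>\<^sub>M M) \<Otimes>\<^sub>M \<mu>)"
    unfolding Q_def by measurable
  then have "(\<lambda>x. emeasure \<mu> (Pair x -` Q)) \<in> borel_measurable (\<mu> \<Otimes>\<^sub>M M)"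
    by (rule \<mu>.measurable_emeasure_Pair)
  then show ?thesis
  proof (rule measurable_cong[THEN iffD1, rotated])
    fix x assume x: "x \<in> space (\<mu> \<Otimes>\<^sub>M M)"
    then have "snd x \<in> space M"
      by (auto simp: space_pair_measure)
    have "Pair x -` Q = (\<lambda>t. Z t (snd x)) -` cball (Z (fst x) (snd x)) r"
      using x by (auto simp: Q_def space_pair_measure mem_cball)
    then show "emeasure \<mu> (Pair x -` Q) = ball_mass (fst x) (snd x) r"
      by (simp add: emeasure_image_measure[OF \<open>snd x \<in> space M\<close>])
  qed
qed

lemma AE_AE_small_ball_mass:
  assumes "mean_lower_density_zero \<gamma>"
  shows "AE \<omega> in M. AE t in \<mu>. small_at_rational_radii \<gamma> (ball_mass t \<omega>)"
proof -
  interpret \<mu>: prob_space \<mu>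
    by (rule prob_space_\<mu>)
  interpret M: prob_space M
    by (rule prob_space_M)
  interpret pair_sigma_finite \<mu> M ..
  have "{x \<in> space (\<mu> \<Otimes>\<^sub>M M). small_at_rational_radii \<gamma> (ball_mass (fst x) (snd x))} \<in> sets (\<mu> \<Otimes>\<^sub>M M)"
    unfolding small_at_rational_radii_def by measurable
  moreover have "AE t in \<mu>. AE \<omega> in M. small_at_rational_radii \<gamma> (ball_mass t \<omega>)"
    using assms
  proof (rule eventually_mono)
    fix t
    assume "Liminf (at_right 0) (\<lambda>r. ennreal (r powr -\<gamma>) * (\<integral>\<^sup>+\<omega>. ball_mass t \<omega> r \<partial>M)) = 0"
    then show "AE \<omega> in M. small_at_rational_radii \<gamma> (ball_mass t \<omega>)"
      using measurable_Pair2[OF measurable_ball_mass, of t]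
      by (intro AE_small_at_rational_radii) (auto intro: ball_mass_mono)
  qed
  ultimately show ?thesis
    by (simp add: AE_commute)
qed

lemma AE_packing_dim_ge:
  assumes "mean_lower_density_zero \<gamma>"
  shows "AE \<omega> in M. \<forall>W S. W \<in> sets \<mu> \<longrightarrow> 0 < emeasure \<mu> W \<longrightarrow> (\<lambda>t. Z t \<omega>) ` W \<subseteq> S
    \<longrightarrow> ereal \<gamma> \<le> packing_dim S"
  using AE_AE_small_ball_mass[OF assms]
proof (rule AE_mp[OF _ AE_I2], intro impI allI)
  fix \<omega> W S
  assume \<omega>: "\<omega> \<in> space M" and small: "AE t in \<mu>. small_at_rational_radii \<gamma> (ball_mass t \<omega>)"
    and W: "W \<in> sets \<mu>" "0 < emeasure \<mu> W" "(\<lambda>t. Z t \<omega>) ` W \<subseteq> S"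
  define Y where "Y = (\<lambda>t. Z t \<omega>) ` {t \<in> W. small_at_rational_radii \<gamma> (ball_mass t \<omega>)}"
  show "ereal \<gamma> \<le> packing_dim S"
  proof (rule packing_dim_ge_of_lower_density_zero)
    show "sets (image_measure \<mu> Z \<omega>) = sets borel"
      by (simp add: image_measure_def)
    show "Y \<subseteq> S"
      using W(3) by (auto simp: Y_def)
    show "lower_density_zero (image_measure \<mu> Z \<omega>) s y" if "s \<le> \<gamma>" "y \<in> Y" for s y
      using that by (auto simp: Y_def intro: lower_density_zero_if_small_at_rational_radii)
    show "\<not> Y \<subseteq> N" if "N \<in> null_sets (image_measure \<mu> Z \<omega>)" for N
    proof
      assume "Y \<subseteq> N"
      have N: "N \<in> sets borel"
        using that by (auto simp: image_measure_def)
      have "emeasure \<mu> ((\<lambda>t. Z t \<omega>) -` N) = 0"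
        using that emeasure_image_measure[OF \<omega> N] by auto
      have "AE t in \<mu>. t \<in> W \<longrightarrow> t \<in> (\<lambda>t. Z t \<omega>) -` N"
        using small \<open>Y \<subseteq> N\<close> by (auto simp: Y_def elim!: eventually_mono)
      then have "emeasure \<mu> W \<le> emeasure \<mu> ((\<lambda>t. Z t \<omega>) -` N)"
        using measurable_sets[OF measurable_Z_section[OF \<omega>] N] by (intro emeasure_mono_AE) auto
      with W(2) \<open>emeasure \<mu> ((\<lambda>t. Z t \<omega>) -` N) = 0\<close> show False
        by simp
    qed
  qed
qed

lemma AE_packing_dim_measure_ge:
  assumes "mean_lower_density_zero \<gamma>"
  shows "AE \<omega> in M. ereal \<gamma> \<le> packing_dim_measure (image_measure \<mu> Z \<omega>)"
  using AE_packing_dim_ge[OF assms]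
proof (rule AE_mp[OF _ AE_I2], intro impI)
  fix \<omega> assume \<omega>: "\<omega> \<in> space M"
    and bound: "\<forall>W S. W \<in> sets \<mu> \<longrightarrow> 0 < emeasure \<mu> W \<longrightarrow> (\<lambda>t. Z t \<omega>) ` W \<subseteq> S
      \<longrightarrow> ereal \<gamma> \<le> packing_dim S"
  show "ereal \<gamma> \<le> packing_dim_measure (image_measure \<mu> Z \<omega>)"
    unfolding packing_dim_measure_def
  proof (rule Inf_greatest, safe)
    fix E :: "'b set" assume E: "E \<in> sets borel" "0 < emeasure (image_measure \<mu> Z \<omega>) E"
    then show "ereal \<gamma> \<le> packing_dim E"
      using bound measurable_sets[OF measurable_Z_section[OF \<omega>] E(1)]
        emeasure_image_measure[OF \<omega> E(1)]
      by auto
  qed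
qed

lemma AE_packing_dim_image_ge:
  assumes "measure_support \<mu> \<subseteq> A"
    and "mean_lower_density_zero \<gamma>"
  shows "AE \<omega> in M. ereal \<gamma> \<le> packing_dim ((\<lambda>t. Z t \<omega>) ` A)"
proof -
  interpret \<mu>: prob_space \<mu>
    by (rule prob_space_\<mu>)
  have support: "measure_support \<mu> \<in> sets \<mu>"
    by (simp add: sets_\<mu> borel_closed closed_measure_support)
  then have "emeasure \<mu> (measure_support \<mu>) = 1"
    using \<mu>.prob_eq_1 AE_in_measure_support[OF sets_\<mu>] by (simp add: \<mu>.emeasure_eq_measure)
  then show ?thesis
    using AE_packing_dim_ge[OF assms(2)] support assms(1)
    by (elim eventually_mono) (auto simp: image_mono)
qed

end

lemma random_map_if_Pc:
  assumes "prob_space M" "jointly_measurable M Z" "\<mu> \<in> Pc A"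
  shows "random_map M Z \<mu>"
  using assms unfolding random_map_def Pc_def by auto

lemma less_packing_dim_ZE:
  assumes "x < packing_dim_Z M Z \<mu>"
  obtains \<gamma> where "x < ereal \<gamma>"
    "AE t in \<mu>. Liminf (at_right 0) (\<lambda>r. ennreal (r powr -\<gamma>) *
      (\<integral>\<^sup>+\<omega>. emeasure (image_measure \<mu> Z \<omega>) (cball (Z t \<omega>) r) \<partial>M)) = 0"
  using assms less_Sup_iff[of x] unfolding packing_dim_Z_def by auto

lemma AE_ereal_ge_by_rationals:
  fixes X :: ereal and D :: "'w \<Rightarrow> ereal"
  assumes "\<And>q::rat. ereal (real_of_rat q) < X \<Longrightarrow> AE \<omega> in M. ereal (real_of_rat q) \<le> D \<omega>"
  shows "AE \<omega> in M. X \<le> D \<omega>"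
proof -
  have "AE \<omega> in M. \<forall>q::rat. ereal (real_of_rat q) < X \<longrightarrow> ereal (real_of_rat q) \<le> D \<omega>"
    unfolding AE_all_countable by (intro allI AE_impI assms)
  then show ?thesis
  proof (rule eventually_mono)
    fix \<omega> assume below: "\<forall>q::rat. ereal (real_of_rat q) < X \<longrightarrow> ereal (real_of_rat q) \<le> D \<omega>"
    show "X \<le> D \<omega>"
    proof (rule ccontr)
      assume "\<not> X \<le> D \<omega>"
      then have "D \<omega> < X"
        by simp
      then obtain q :: rat where "D \<omega> < real_of_rat q" "real_of_rat q < X"
        using ereal_dense3 by blast
      with below show False
        by (meson not_le)
    qed
  qed
qed

lemma AE_packing_dim_Z_le_packing_dim_measure:
  assumes "prob_space M" "jointly_measurable M Z" "\<mu> \<in> Pc A"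
  shows "AE \<omega> in M. packing_dim_Z M Z \<mu> \<le> packing_dim_measure (image_measure \<mu> Z \<omega>)"
proof (rule AE_ereal_ge_by_rationals)
  fix q :: rat assume "ereal (real_of_rat q) < packing_dim_Z M Z \<mu>"
  then obtain \<gamma> where q: "ereal (real_of_rat q) < ereal \<gamma>"
    and \<gamma>: "AE t in \<mu>. Liminf (at_right 0) (\<lambda>r. ennreal (r powr -\<gamma>) *
      (\<integral>\<^sup>+\<omega>. emeasure (image_measure \<mu> Z \<omega>) (cball (Z t \<omega>) r) \<partial>M)) = 0"
    by (rule less_packing_dim_ZE)
  have "AE \<omega> in M. ereal \<gamma> \<le> packing_dim_measure (image_measure \<mu> Z \<omega>)"
    using random_map.AE_packing_dim_measure_ge[OF random_map_if_Pc[OF assms] \<gamma>] .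
  then show "AE \<omega> in M. ereal (real_of_rat q) \<le> packing_dim_measure (image_measure \<mu> Z \<omega>)"
    by (rule eventually_mono) (rule order.trans[OF less_imp_le[OF q]])
qed

lemma AE_packing_dim_Z_set_le_packing_dim_image:
  assumes "prob_space M" "jointly_measurable M Z"
  shows "AE \<omega> in M. packing_dim_Z_set M Z A \<le> packing_dim ((\<lambda>t. Z t \<omega>) ` A)"
proof (rule AE_ereal_ge_by_rationals)
  fix q :: rat assume "ereal (real_of_rat q) < packing_dim_Z_set M Z A"
  then obtain \<nu> where \<nu>: "\<nu> \<in> Pc A" "ereal (real_of_rat q) < packing_dim_Z M Z \<nu>"
    unfolding packing_dim_Z_set_def less_SUP_iff by blast
  obtain \<gamma> where q: "ereal (real_of_rat q) < ereal \<gamma>"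
    and \<gamma>: "AE t in \<nu>. Liminf (at_right 0) (\<lambda>r. ennreal (r powr -\<gamma>) *
      (\<integral>\<^sup>+\<omega>. emeasure (image_measure \<nu> Z \<omega>) (cball (Z t \<omega>) r) \<partial>M)) = 0"
    using \<nu>(2) by (rule less_packing_dim_ZE)
  have "measure_support \<nu> \<subseteq> A"
    using \<nu>(1) by (simp add: Pc_def)
  then have "AE \<omega> in M. ereal \<gamma> \<le> packing_dim ((\<lambda>t. Z t \<omega>) ` A)"
    using random_map.AE_packing_dim_image_ge[OF random_map_if_Pc[OF assms \<nu>(1)] _ \<gamma>] by blast
  then show "AE \<omega> in M. ereal (real_of_rat q) \<le> packing_dim ((\<lambda>t. Z t \<omega>) ` A)"
    by (rule eventually_mono) (rule order.trans[OF less_imp_le[OF q]])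
qed

theorem theorem1p2:
  fixes M :: "'w measure"
    and Z :: "'a::euclidean_space \<Rightarrow> 'w \<Rightarrow> 'b::euclidean_space"
    and \<mu> :: "'a measure"
    and A :: "'a set"
  assumes "prob_space M"
    and "jointly_measurable M Z"
    and "\<mu> \<in> Pc UNIV"
    and "analytic_set A"
  shows "AE \<omega> in M. packing_dim_measure (image_measure \<mu> Z \<omega>) \<ge> packing_dim_Z M Z \<mu>
                   \<and> packing_dim ((\<lambda>t. Z t \<omega>) ` A) \<ge> packing_dim_Z_set M Z A"
proof -
  show ?thesis
    using AE_packing_dim_Z_le_packing_dim_measure[OF assms(1-3)]
      AE_packing_dim_Z_set_le_packing_dim_image[OF assms(1,2)]
    by (rule eventually_conj)
qed

end
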